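(* Let $\mathbb{T}$ be a geometric theory over $\Sigma$, let $\{\mathbf{x}\mid\phi\}$ and $\{\mathbf{x},\mathbf{y}\mid\psi\}$ be formulas in context, and let $\mathbf{a}$ be a tuple of pairwise distinct elements of $\mathbb{S}$ of the same length as $\mathbf{y}$. Then the stabilization (with respect to the action $\theta$) of the basic open subset \[[\![\{\mathbf{x},\mathbf{y}\mid\psi\},\mathbf{a}]\!]=\{(\mathbf{M},[\mathbf{b}]):([\mathbf{b}],[\mathbf{a}])\in[\![\mathbf{x},\mathbf{y}\mid\phi\wedge\psi]\!]^{\mathbf{M}}\}\subseteq[\![\mathbf{x}\mid\phi]\!]\] is the definable subset $[\![\mathbf{x}\mid\phi\wedge\exists\mathbf{y}\,\psi]\!]\subseteq[\![\mathbf{x}\mid\phi]\!]$.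
   Context: $\Sigma$ is a single-sorted first-order signature with equality, $\kappa\geq|\Sigma|+\aleph_0$ an infinite cardinal, $\mathbb{S}$ a fixed set of cardinality at least $\kappa$. $M_{\mathbb{T}}$ is the set of $\mathbb{T}$-models whose underlying set is a quotient of a subset of $\mathbb{S}$ (elements written $[a]$), and $I_{\mathbb{T}}$ the set of isomorphisms between them. For a formula in context $\{\mathbf{x}\mid\phi\}$, $[\![\mathbf{x}\mid\phi]\!]=\{(\mathbf{M},[\mathbf{b}]):\mathbf{M}\in M_{\mathbb{T}},[\mathbf{b}]\in\phi^{\mathbf{M}}\}$, with the action $\theta(\mathbf{f}:\mathbf{M}\to\mathbf{N},(\mathbf{M},[\mathbf{b}]))=(\mathbf{N},\mathbf{f}([\mathbf{b}]))$ of $I_{\mathbb{T}}$. A subset is stable if it is closed under this action, and the stabilization of a subset is the least stable subset containing it. *)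

theory Defs
  imports Main
begin

datatype 'f trm = Var nat | App 'f "'f trm list"

datatype ('f, 'r, 'i) gfm =
    Tru
  | Rel 'r "'f trm list"
  | Eq "'f trm" "'f trm"
  | Conj "('f, 'r, 'i) gfm" "('f, 'r, 'i) gfm"
  | Disj "'i set" "'i \<Rightarrow> ('f, 'r, 'i) gfm"
  | Ex nat "('f, 'r, 'i) gfm"

fun fv_trm :: "'f trm \<Rightarrow> nat set" where
  "fv_trm (Var n) = {n}"
| "fv_trm (App g ts) = (\<Union>t\<in>set ts. fv_trm t)"

fun wf_trm :: "('f \<Rightarrow> nat) \<Rightarrow> 'f trm \<Rightarrow> bool" where
  "wf_trm arF (Var n) = True"
| "wf_trm arF (App g ts) = (length ts = arF g \<and> (\<forall>t\<in>set ts. wf_trm arF t))"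

primrec fv :: "('f, 'r, 'i) gfm \<Rightarrow> nat set" where
  "fv Tru = {}"
| "fv (Rel r ts) = (\<Union>t\<in>set ts. fv_trm t)"
| "fv (Eq s t) = fv_trm s \<union> fv_trm t"
| "fv (Conj p q) = fv p \<union> fv q"
| "fv (Disj I F) = (\<Union>i\<in>I. fv (F i))"
| "fv (Ex n p) = fv p - {n}"

primrec wf_fm :: "('f \<Rightarrow> nat) \<Rightarrow> ('r \<Rightarrow> nat) \<Rightarrow> ('f, 'r, 'i) gfm \<Rightarrow> bool" where
  "wf_fm arF arR Tru = True"
| "wf_fm arF arR (Rel r ts) = (length ts = arR r \<and> (\<forall>t\<in>set ts. wf_trm arF t))"
| "wf_fm arF arR (Eq s t) = (wf_trm arF s \<and> wf_trm arF t)"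
| "wf_fm arF arR (Conj p q) = (wf_fm arF arR p \<and> wf_fm arF arR q)"
| "wf_fm arF arR (Disj I F) = (\<forall>i\<in>I. wf_fm arF arR (F i))"
| "wf_fm arF arR (Ex n p) = wf_fm arF arR p"

definition fm_in_ctx :: "('f \<Rightarrow> nat) \<Rightarrow> ('r \<Rightarrow> nat) \<Rightarrow> nat list \<Rightarrow> ('f, 'r, 'i) gfm \<Rightarrow> bool" where
  "fm_in_ctx arF arR x p \<longleftrightarrow> distinct x \<and> wf_fm arF arR p \<and> fv p \<subseteq> set x"

definition Exs :: "nat list \<Rightarrow> ('f, 'r, 'i) gfm \<Rightarrow> ('f, 'r, 'i) gfm" where
  "Exs ys p = foldr Ex ys p"

type_synonym ('f, 'r, 'i) sequent = "nat list \<times> ('f, 'r, 'i) gfm \<times> ('f, 'r, 'i) gfm"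

definition geom_theory :: "('f \<Rightarrow> nat) \<Rightarrow> ('r \<Rightarrow> nat) \<Rightarrow> ('f, 'r, 'i) sequent set \<Rightarrow> bool" where
  "geom_theory arF arR T \<longleftrightarrow>
     (\<forall>(x, p, q)\<in>T. fm_in_ctx arF arR x p \<and> fm_in_ctx arF arR x q)"

text \<open>A structure: a subset dom of S, an equivalence relation eqv on it; the underlying
set is dom // eqv (elements are classes [a]); interpretations of function and relation
symbols on classes.\<close>
record ('a, 'f, 'r) strc =
  dom :: "'a set"
  eqv :: "('a \<times> 'a) set"
  fn  :: "'f \<Rightarrow> 'a set list \<Rightarrow> 'a set"
  rl  :: "'r \<Rightarrow> 'a set list set"

definition carrier :: "('a, 'f, 'r) strc \<Rightarrow> 'a set set" where
  "carrier M = dom M // eqv M"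

definition cls :: "('a, 'f, 'r) strc \<Rightarrow> 'a \<Rightarrow> 'a set" where
  "cls M a = eqv M `` {a}"

definition wf_strc :: "'a set \<Rightarrow> ('f \<Rightarrow> nat) \<Rightarrow> ('r \<Rightarrow> nat) \<Rightarrow> ('a, 'f, 'r) strc \<Rightarrow> bool" where
  "wf_strc S arF arR M \<longleftrightarrow>
     dom M \<subseteq> S \<and> equiv (dom M) (eqv M) \<and>
     (\<forall>g bs. (length bs = arF g \<and> set bs \<subseteq> carrier M \<longrightarrow> fn M g bs \<in> carrier M) \<and>
             (\<not> (length bs = arF g \<and> set bs \<subseteq> carrier M) \<longrightarrow> fn M g bs = undefined)) \<and>
     (\<forall>r. rl M r \<subseteq> {bs. length bs = arR r \<and> set bs \<subseteq> carrier M})"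

fun eval :: "('a, 'f, 'r) strc \<Rightarrow> (nat \<Rightarrow> 'a set) \<Rightarrow> 'f trm \<Rightarrow> 'a set" where
  "eval M v (Var n) = v n"
| "eval M v (App g ts) = fn M g (map (eval M v) ts)"

primrec sat :: "('a, 'f, 'r) strc \<Rightarrow> ('f, 'r, 'i) gfm \<Rightarrow> (nat \<Rightarrow> 'a set) \<Rightarrow> bool" where
  "sat M Tru v = True"
| "sat M (Rel r ts) v = (map (eval M v) ts \<in> rl M r)"
| "sat M (Eq s t) v = (eval M v s = eval M v t)"
| "sat M (Conj p q) v = (sat M p v \<and> sat M q v)"
| "sat M (Disj I F) v = (\<exists>i\<in>I. sat M (F i) v)"
| "sat M (Ex n p) v = (\<exists>c\<in>carrier M. sat M p (v(n := c)))"

definition asg :: "nat list \<Rightarrow> 'a set list \<Rightarrow> nat \<Rightarrow> 'a set" where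
  "asg x bs = (\<lambda>n. case map_of (zip x bs) n of Some c \<Rightarrow> c | None \<Rightarrow> undefined)"

definition interp :: "('a, 'f, 'r) strc \<Rightarrow> nat list \<Rightarrow> ('f, 'r, 'i) gfm \<Rightarrow> 'a set list set" where
  "interp M x p = {bs. length bs = length x \<and> set bs \<subseteq> carrier M \<and> sat M p (asg x bs)}"

definition is_model :: "'a set \<Rightarrow> ('f \<Rightarrow> nat) \<Rightarrow> ('r \<Rightarrow> nat) \<Rightarrow> ('f, 'r, 'i) sequent set
    \<Rightarrow> ('a, 'f, 'r) strc \<Rightarrow> bool" where
  "is_model S arF arR T M \<longleftrightarrow> wf_strc S arF arR M \<and>
     (\<forall>(x, p, q)\<in>T. interp M x p \<subseteq> interp M x q)"

definition M_T :: "'a set \<Rightarrow> ('f \<Rightarrow> nat) \<Rightarrow> ('r \<Rightarrow> nat) \<Rightarrow> ('f, 'r, 'i) sequent set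
    \<Rightarrow> ('a, 'f, 'r) strc set" where
  "M_T S arF arR T = {M. is_model S arF arR T M}"

definition is_iso :: "('f \<Rightarrow> nat) \<Rightarrow> ('r \<Rightarrow> nat) \<Rightarrow> ('a, 'f, 'r) strc \<Rightarrow> ('a, 'f, 'r) strc
    \<Rightarrow> ('a set \<Rightarrow> 'a set) \<Rightarrow> bool" where
  "is_iso arF arR M N f \<longleftrightarrow>
     bij_betw f (carrier M) (carrier N) \<and> (\<forall>c. c \<notin> carrier M \<longrightarrow> f c = undefined) \<and>
     (\<forall>g bs. length bs = arF g \<and> set bs \<subseteq> carrier M \<longrightarrow> f (fn M g bs) = fn N g (map f bs)) \<and>
     (\<forall>r bs. length bs = arR r \<and> set bs \<subseteq> carrier M \<longrightarrow> (bs \<in> rl M r \<longleftrightarrow> map f bs \<in> rl N r))"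

definition I_T :: "'a set \<Rightarrow> ('f \<Rightarrow> nat) \<Rightarrow> ('r \<Rightarrow> nat) \<Rightarrow> ('f, 'r, 'i) sequent set
    \<Rightarrow> (('a, 'f, 'r) strc \<times> ('a, 'f, 'r) strc \<times> ('a set \<Rightarrow> 'a set)) set" where
  "I_T S arF arR T = {(M, N, f). M \<in> M_T S arF arR T \<and> N \<in> M_T S arF arR T \<and> is_iso arF arR M N f}"

definition definable :: "'a set \<Rightarrow> ('f \<Rightarrow> nat) \<Rightarrow> ('r \<Rightarrow> nat) \<Rightarrow> ('f, 'r, 'i) sequent set
    \<Rightarrow> nat list \<Rightarrow> ('f, 'r, 'i) gfm \<Rightarrow> (('a, 'f, 'r) strc \<times> 'a set list) set" where
  "definable S arF arR T x p = {(M, bs). M \<in> M_T S arF arR T \<and> bs \<in> interp M x p}"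

text \<open>Stability under the action theta(f : M -> N, (M, [b])) = (N, f([b])).\<close>
definition stable :: "'a set \<Rightarrow> ('f \<Rightarrow> nat) \<Rightarrow> ('r \<Rightarrow> nat) \<Rightarrow> ('f, 'r, 'i) sequent set
    \<Rightarrow> (('a, 'f, 'r) strc \<times> 'a set list) set \<Rightarrow> bool" where
  "stable S arF arR T X \<longleftrightarrow>
     (\<forall>(M, N, f)\<in>I_T S arF arR T. \<forall>bs. (M, bs) \<in> X \<longrightarrow> (N, map f bs) \<in> X)"

definition stabilization :: "'a set \<Rightarrow> ('f \<Rightarrow> nat) \<Rightarrow> ('r \<Rightarrow> nat) \<Rightarrow> ('f, 'r, 'i) sequent set
    \<Rightarrow> nat list \<Rightarrow> ('f, 'r, 'i) gfm \<Rightarrow> (('a, 'f, 'r) strc \<times> 'a set list) set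
    \<Rightarrow> (('a, 'f, 'r) strc \<times> 'a set list) set" where
  "stabilization S arF arR T x p X =
     \<Inter> {Y. X \<subseteq> Y \<and> Y \<subseteq> definable S arF arR T x p \<and> stable S arF arR T Y}"

definition basic_open :: "'a set \<Rightarrow> ('f \<Rightarrow> nat) \<Rightarrow> ('r \<Rightarrow> nat) \<Rightarrow> ('f, 'r, 'i) sequent set
    \<Rightarrow> nat list \<Rightarrow> nat list \<Rightarrow> ('f, 'r, 'i) gfm \<Rightarrow> ('f, 'r, 'i) gfm \<Rightarrow> 'a list
    \<Rightarrow> (('a, 'f, 'r) strc \<times> 'a set list) set" where
  "basic_open S arF arR T x y p q a =
     {(M, bs). M \<in> M_T S arF arR T \<and> set a \<subseteq> dom M \<and>
               bs @ map (cls M) a \<in> interp M (x @ y) (Conj p q)}"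

end

theory Submission
  imports Defs "HOL-Library.FuncSet"
begin

text \<open>
  The definable set \<open>[[x | \<phi> \<and> \<exists>y \<psi>]]\<close> is stable (satisfaction is invariant under
  isomorphism) and contains the basic open set, so it contains its stabilization.
  Conversely, let \<open>(M, [b])\<close> be in it, witnessed by \<open>[c]\<close>. Since \<open>S\<close> is infinite and
  \<open>|M| \<le> |S|\<close>, there is a surjection \<open>h\<close> from some \<open>D \<subseteq> S\<close> onto \<open>M\<close> with \<open>h a = [c]\<close>.
  Pulling \<open>M\<close> back along \<open>h\<close> gives an isomorphic model \<open>N\<close> with carrier \<open>D // ker h\<close> in
  which the class of \<open>a\<close> is the image of \<open>[c]\<close>; so the image of \<open>(M, [b])\<close> in \<open>N\<close> lies in
  the basic open set, and \<open>(M, [b])\<close> lies in every stable set containing that set.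
\<close>

lemma eval_cong: "(\<And>n. n \<in> fv_trm t \<Longrightarrow> v n = w n) \<Longrightarrow> eval M v t = eval M w t"
proof (induction t)
  case (App g ts)
  have "eval M v t = eval M w t" if "t \<in> set ts" for t
  proof (rule App.IH[OF that])
    show "v n = w n" if "n \<in> fv_trm t" for n
      using \<open>t \<in> set ts\<close> that by (intro App.prems) auto
  qed
  then have "map (eval M v) ts = map (eval M w) ts" by (rule map_cong[OF refl])
  then show ?case by (simp only: eval.simps)
qed simp

lemma sat_cong: "(\<And>n. n \<in> fv p \<Longrightarrow> v n = w n) \<Longrightarrow> sat M p v = sat M p w"
proof (induction p arbitrary: v w)
  case (Rel r ts)
  have "eval M v t = eval M w t" if "t \<in> set ts" for t
  proof (rule eval_cong)
    show "v n = w n" if "n \<in> fv_trm t" for n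
      using \<open>t \<in> set ts\<close> that by (intro Rel.prems) auto
  qed
  then have "map (eval M v) ts = map (eval M w) ts" by (rule map_cong[OF refl])
  then show ?case by (simp only: sat.simps)
next
  case (Eq s t)
  have "eval M v s = eval M w s" "eval M v t = eval M w t"
    by (rule eval_cong, rule Eq.prems, simp)+
  then show ?case by simp
next
  case (Conj p q)
  have "sat M p v = sat M p w" "sat M q v = sat M q w"
    by (rule Conj.IH, rule Conj.prems, simp)+
  then show ?case by simp
next
  case (Disj I F)
  have "sat M (F i) v = sat M (F i) w" if "i \<in> I" for i
    by (rule Disj.IH, simp, rule Disj.prems) (use that in auto)
  then show ?case by simp
next
  case (Ex n p)
  have "sat M p (v(n := c)) = sat M p (w(n := c))" for c
    by (rule Ex.IH) (simp add: Ex.prems)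
  then show ?case by simp
qed simp

lemma wf_strc_fn_closed:
  "wf_strc S arF arR M \<Longrightarrow> length bs = arF g \<Longrightarrow> set bs \<subseteq> carrier M \<Longrightarrow> fn M g bs \<in> carrier M"
  unfolding wf_strc_def by metis

lemma is_iso_bij: "is_iso arF arR M N f \<Longrightarrow> bij_betw f (carrier M) (carrier N)"
  unfolding is_iso_def by metis

lemma is_iso_fn:
  "is_iso arF arR M N f \<Longrightarrow> length bs = arF g \<Longrightarrow> set bs \<subseteq> carrier M
    \<Longrightarrow> f (fn M g bs) = fn N g (map f bs)"
  unfolding is_iso_def by metis

lemma is_iso_rl:
  "is_iso arF arR M N f \<Longrightarrow> length bs = arR r \<Longrightarrow> set bs \<subseteq> carrier M
    \<Longrightarrow> bs \<in> rl M r \<longleftrightarrow> map f bs \<in> rl N r"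
  unfolding is_iso_def by metis

lemma eval_iso:
  assumes iso: "is_iso arF arR M N f" and wf: "wf_strc S arF arR M"
    and "wf_trm arF t" and "\<And>n. n \<in> fv_trm t \<Longrightarrow> v n \<in> carrier M"
  shows "eval M v t \<in> carrier M \<and> f (eval M v t) = eval N (f \<circ> v) t"
  using assms(3,4)
proof (induction t)
  case (App g ts)
  let ?bs = "map (eval M v) ts"
  have ev: "eval M v t \<in> carrier M \<and> f (eval M v t) = eval N (f \<circ> v) t" if "t \<in> set ts" for t
    using that App.prems by (intro App.IH) auto
  then have bs: "set ?bs \<subseteq> carrier M" "length ?bs = arF g" using App.prems by auto
  have "map f ?bs = map (eval N (f \<circ> v)) ts"
    unfolding map_map by (rule map_cong[OF refl]) (simp add: ev)
  then show ?case
    using wf_strc_fn_closed[OF wf bs(2,1)] is_iso_fn[OF iso bs(2,1)] by (metis eval.simps(2))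
qed simp

lemma sat_iso:
  assumes iso: "is_iso arF arR M N f" and wf: "wf_strc S arF arR M"
    and "wf_fm arF arR p" and "\<And>n. n \<in> fv p \<Longrightarrow> v n \<in> carrier M"
  shows "sat M p v = sat N p (f \<circ> v)"
  using assms(3,4)
proof (induction p arbitrary: v)
  case (Rel r ts)
  let ?bs = "map (eval M v) ts"
  have ev: "eval M v t \<in> carrier M \<and> f (eval M v t) = eval N (f \<circ> v) t" if "t \<in> set ts" for t
    using that Rel.prems by (intro eval_iso[OF iso wf]) auto
  then have bs: "set ?bs \<subseteq> carrier M" "length ?bs = arR r" using Rel.prems by auto
  have "map f ?bs = map (eval N (f \<circ> v)) ts"
    unfolding map_map by (rule map_cong[OF refl]) (simp add: ev)
  then show ?case using is_iso_rl[OF iso bs(2,1)] by (metis sat.simps(2))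
next
  case (Eq s t)
  have "inj_on f (carrier M)" using is_iso_bij[OF iso] by (rule bij_betw_imp_inj_on)
  moreover have "eval M v s \<in> carrier M \<and> f (eval M v s) = eval N (f \<circ> v) s"
    "eval M v t \<in> carrier M \<and> f (eval M v t) = eval N (f \<circ> v) t"
    using Eq.prems by (intro eval_iso[OF iso wf]; simp)+
  ultimately show ?case by (metis inj_on_eq_iff sat.simps(3))
next
  case (Conj p q)
  have "sat M p v = sat N p (f \<circ> v)" "sat M q v = sat N q (f \<circ> v)"
    using Conj.prems by (intro Conj.IH; simp)+
  then show ?case by (metis sat.simps(4))
next
  case (Disj I F)
  have "sat M (F i) v = sat N (F i) (f \<circ> v)" if "i \<in> I" for i
    using that Disj.prems by (intro Disj.IH) auto
  then show ?case by (metis sat.simps(5))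
next
  case (Ex n p)
  have step: "sat M p (v(n := c)) = sat N p ((f \<circ> v)(n := f c))" if "c \<in> carrier M" for c
  proof -
    have "sat M p (v(n := c)) = sat N p (f \<circ> v(n := c))"
      using Ex.prems that by (intro Ex.IH) auto
    then show ?thesis by (simp only: fun_upd_comp)
  qed
  have onto: "f ` carrier M = carrier N" using is_iso_bij[OF iso] by (rule bij_betw_imp_surj_on)
  have "sat M (Ex n p) v \<longleftrightarrow> (\<exists>c\<in>carrier M. sat N p ((f \<circ> v)(n := f c)))"
    unfolding sat.simps using step by blast
  also have "\<dots> \<longleftrightarrow> sat N (Ex n p) (f \<circ> v)"
    unfolding sat.simps onto[symmetric] by blast
  finally show ?case .
qed simp

definition upds :: "(nat \<Rightarrow> 'a) \<Rightarrow> nat list \<Rightarrow> 'a list \<Rightarrow> nat \<Rightarrow> 'a" where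
  "upds v ys cs n = (case map_of (zip ys cs) n of Some c \<Rightarrow> c | None \<Rightarrow> v n)"

lemma upds_Nil [simp]: "upds v [] cs = v"
  by (rule ext) (simp add: upds_def)

lemma map_of_zip_notin: "n \<notin> set ys \<Longrightarrow> map_of (zip ys cs) n = None"
  by (meson map_of_SomeD not_None_eq set_zip_leftD)

lemma upds_notin: "n \<notin> set ys \<Longrightarrow> upds v ys cs n = v n"
  by (simp add: upds_def map_of_zip_notin)

lemma upds_Cons: "y \<notin> set ys \<Longrightarrow> upds (v(y := c)) ys cs = upds v (y # ys) (c # cs)"
  by (rule ext) (simp add: upds_def map_of_zip_notin split: option.split)

lemma upds_append:
  assumes "length xs = length bs" and "set xs \<inter> set ys = {}"
  shows "upds (upds v xs bs) ys cs = upds v (xs @ ys) (bs @ cs)"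
proof
  fix n
  show "upds (upds v xs bs) ys cs n = upds v (xs @ ys) (bs @ cs) n"
  proof (cases "n \<in> set ys")
    case True
    then have "n \<notin> set xs" using assms(2) by blast
    then have "map_of (zip xs bs) n = None" by (rule map_of_zip_notin)
    then show ?thesis
      by (simp add: upds_def zip_append[OF assms(1)] map_add_def split: option.split)
  next
    case False
    then have "map_of (zip ys cs) n = None" by (rule map_of_zip_notin)
    then show ?thesis
      by (simp add: upds_def zip_append[OF assms(1)] map_add_def split: option.split)
  qed
qed

lemma asg_eq_upds: "asg x bs = upds (\<lambda>_. undefined) x bs"
  by (rule ext) (simp add: asg_def upds_def)

lemma asg_in_set:
  assumes "length x = length bs" and "n \<in> set x"
  shows "asg x bs n \<in> set bs"
proof -
  obtain c where c: "map_of (zip x bs) n = Some c" using map_of_zip_is_Some assms by metis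
  then have "c \<in> set bs" by (meson map_of_SomeD set_zip_rightD)
  then show ?thesis using c by (simp add: asg_def)
qed

lemma asg_map:
  assumes "length x = length bs" and "n \<in> set x"
  shows "asg x (map f bs) n = f (asg x bs n)"
proof -
  obtain c where "map_of (zip x bs) n = Some c" using map_of_zip_is_Some assms by metis
  then show ?thesis by (simp add: asg_def zip_map2 map_of_map)
qed

lemma interp_iso:
  assumes iso: "is_iso arF arR M N f" and wf: "wf_strc S arF arR M"
    and p: "wf_fm arF arR p" "fv p \<subseteq> set x" and bs: "bs \<in> interp M x p"
  shows "map f bs \<in> interp N x p"
proof -
  have len: "length x = length bs" and bs_M: "set bs \<subseteq> carrier M" and sat: "sat M p (asg x bs)"
    using bs unfolding interp_def by auto
  have "sat N p (f \<circ> asg x bs)"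
  proof (subst sat_iso[OF iso wf p(1), symmetric])
    show "asg x bs n \<in> carrier M" if "n \<in> fv p" for n
      using asg_in_set[OF len] p(2) that bs_M by blast
  qed (fact sat)
  moreover have "(f \<circ> asg x bs) n = asg x (map f bs) n" if "n \<in> fv p" for n
  proof -
    have "n \<in> set x" using p(2) that by blast
    then show ?thesis by (simp add: asg_map[OF len])
  qed
  ultimately have "sat N p (asg x (map f bs))" using sat_cong by metis
  moreover have "set (map f bs) \<subseteq> carrier N"
    using bs_M bij_betw_imp_surj_on[OF is_iso_bij[OF iso]] by auto
  ultimately show ?thesis using len unfolding interp_def by simp
qed

lemma fv_Exs: "fv (Exs ys p) = fv p - set ys"
  by (induction ys) (auto simp: Exs_def)

lemma wf_Exs: "wf_fm arF arR (Exs ys p) = wf_fm arF arR p"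
  by (induction ys) (auto simp: Exs_def)

lemma ex_length_Suc:
  "(\<exists>cs. length cs = Suc n \<and> P cs) \<longleftrightarrow> (\<exists>c cs. length cs = n \<and> P (c # cs))"
  by (metis length_Suc_conv)

lemma sat_Exs:
  "distinct ys \<Longrightarrow> sat M (Exs ys p) v \<longleftrightarrow>
     (\<exists>cs. length cs = length ys \<and> set cs \<subseteq> carrier M \<and> sat M p (upds v ys cs))"
proof (induction ys arbitrary: v)
  case Nil
  then show ?case by (simp add: Exs_def)
next
  case (Cons y ys)
  have "sat M (Exs (y # ys) p) v \<longleftrightarrow> (\<exists>c\<in>carrier M. sat M (Exs ys p) (v(y := c)))"
    by (simp add: Exs_def)
  also have "\<dots> \<longleftrightarrow> (\<exists>c\<in>carrier M. \<exists>cs. length cs = length ys \<and> set cs \<subseteq> carrier M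
      \<and> sat M p (upds v (y # ys) (c # cs)))"
    using Cons by (simp add: upds_Cons)
  also have "\<dots> \<longleftrightarrow> (\<exists>cs. length cs = length (y # ys) \<and> set cs \<subseteq> carrier M
      \<and> sat M p (upds v (y # ys) cs))"
    unfolding length_Cons ex_length_Suc by auto
  finally show ?case .
qed

lemma interp_Conj_Exs:
  assumes "distinct (x @ y)" and "fv \<phi> \<subseteq> set x"
  shows "bs \<in> interp M x (Conj \<phi> (Exs y \<psi>)) \<longleftrightarrow>
    (\<exists>cs. length cs = length y \<and> bs @ cs \<in> interp M (x @ y) (Conj \<phi> \<psi>))"
proof (cases "length bs = length x")
  case True
  have "asg (x @ y) (bs @ cs) = upds (asg x bs) y cs" for cs
    using assms(1) True by (simp add: asg_eq_upds upds_append)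
  moreover have "sat M \<phi> (upds (asg x bs) y cs) = sat M \<phi> (asg x bs)" for cs
    using assms by (intro sat_cong upds_notin) auto
  ultimately show ?thesis using True assms(1) by (auto simp: interp_def sat_Exs)
qed (simp add: interp_def)

lemma stable_definable:
  assumes "wf_fm arF arR p" and "fv p \<subseteq> set x"
  shows "stable S arF arR T (definable S arF arR T x p)"
  unfolding stable_def
proof clarify
  fix M N f bs
  assume "(M, N, f) \<in> I_T S arF arR T" and "(M, bs) \<in> definable S arF arR T x p"
  then show "(N, map f bs) \<in> definable S arF arR T x p"
    using interp_iso[OF _ _ assms] unfolding definable_def I_T_def M_T_def is_model_def by blast
qed

definition iso_inv :: "('a, 'f, 'r) strc \<Rightarrow> ('a, 'f, 'r) strc \<Rightarrow> ('a set \<Rightarrow> 'a set)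
    \<Rightarrow> 'a set \<Rightarrow> 'a set" where
  "iso_inv M N f = restrict (inv_into (carrier M) f) (carrier N)"

lemma iso_inv_apply: "is_iso arF arR M N f \<Longrightarrow> c \<in> carrier M \<Longrightarrow> iso_inv M N f (f c) = c"
  by (drule is_iso_bij) (simp add: iso_inv_def bij_betw_apply bij_betw_imp_inj_on)

lemma apply_iso_inv: "is_iso arF arR M N f \<Longrightarrow> d \<in> carrier N \<Longrightarrow> f (iso_inv M N f d) = d"
  by (drule is_iso_bij) (simp add: iso_inv_def bij_betw_def f_inv_into_f)

lemma map_iso_inv_map:
  "is_iso arF arR M N f \<Longrightarrow> set cs \<subseteq> carrier M \<Longrightarrow> map (iso_inv M N f) (map f cs) = cs"
  by (induction cs) (simp_all add: iso_inv_apply)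

lemma map_map_iso_inv:
  "is_iso arF arR M N f \<Longrightarrow> set ds \<subseteq> carrier N \<Longrightarrow> map f (map (iso_inv M N f) ds) = ds"
  by (induction ds) (simp_all add: apply_iso_inv)

lemma is_iso_inv:
  assumes iso: "is_iso arF arR M N f" and wf: "wf_strc S arF arR M"
  shows "is_iso arF arR N M (iso_inv M N f)"
proof -
  have bij: "bij_betw (iso_inv M N f) (carrier N) (carrier M)"
    using bij_betw_inv_into[OF is_iso_bij[OF iso]] by (simp add: iso_inv_def)
  have inv_in: "set (map (iso_inv M N f) ds) \<subseteq> carrier M" if "set ds \<subseteq> carrier N" for ds
    using that bij_betw_apply[OF bij] by auto
  show ?thesis
    unfolding is_iso_def
  proof (intro conjI allI impI)
    fix g ds assume ds: "length ds = arF g \<and> set ds \<subseteq> carrier N"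
    then have "fn M g (map (iso_inv M N f) ds) \<in> carrier M"
      using inv_in wf_strc_fn_closed[OF wf] by simp
    moreover have "f (fn M g (map (iso_inv M N f) ds)) = fn N g ds"
      using ds inv_in is_iso_fn[OF iso] map_map_iso_inv[OF iso] by (metis length_map)
    ultimately show "iso_inv M N f (fn N g ds) = fn M g (map (iso_inv M N f) ds)"
      using iso_inv_apply[OF iso] by metis
  next
    fix r ds assume "length ds = arR r \<and> set ds \<subseteq> carrier N"
    then show "ds \<in> rl N r \<longleftrightarrow> map (iso_inv M N f) ds \<in> rl M r"
      using inv_in is_iso_rl[OF iso] map_map_iso_inv[OF iso] by (metis length_map)
  qed (use bij in \<open>auto simp: iso_inv_def\<close>)
qed

lemma is_model_iso:
  assumes T: "geom_theory arF arR T" and M: "is_model S arF arR T M"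
    and wf_N: "wf_strc S arF arR N" and iso: "is_iso arF arR M N f"
  shows "is_model S arF arR T N"
  unfolding is_model_def
proof (intro conjI wf_N ballI subsetI, clarify)
  fix x p q ks assume pq: "(x, p, q) \<in> T" and ks: "ks \<in> interp N x p"
  let ?g = "iso_inv M N f"
  have ctx: "wf_fm arF arR p" "fv p \<subseteq> set x" "wf_fm arF arR q" "fv q \<subseteq> set x"
    using T pq unfolding geom_theory_def fm_in_ctx_def by auto
  have wf_M: "wf_strc S arF arR M" using M unfolding is_model_def by blast
  have "map ?g ks \<in> interp M x p"
    using interp_iso[OF is_iso_inv[OF iso wf_M] wf_N ctx(1,2) ks] .
  then have "map ?g ks \<in> interp M x q" using M pq unfolding is_model_def by blast
  then have "map f (map ?g ks) \<in> interp N x q" using interp_iso[OF iso wf_M ctx(3,4)] by blast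
  moreover have "map f (map ?g ks) = ks"
    using ks map_map_iso_inv[OF iso] unfolding interp_def by blast
  ultimately show "ks \<in> interp N x q" by simp
qed

lemma carrier_eq_image_cls: "carrier M = cls M ` dom M"
  unfolding carrier_def cls_def quotient_def by blast

lemma map_restrict: "set cs \<subseteq> A \<Longrightarrow> map (restrict f A) cs = map f cs"
  by (induction cs) simp_all

text \<open>
  The model on \<open>D // ker h\<close> obtained by pulling \<open>M\<close> back along a surjection \<open>h : D \<rightarrow> M\<close>:
  \<open>fibre\<close> maps an element of \<open>M\<close> to its class, and \<open>rep\<close> maps a class back to the common
  value of \<open>h\<close> on it.
\<close>

locale transport =
  fixes S :: "'a set" and arF :: "'f \<Rightarrow> nat" and arR :: "'r \<Rightarrow> nat"
    and M :: "('a, 'f, 'r) strc" and D :: "'a set" and h :: "'a \<Rightarrow> 'a set"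
  assumes wf_M: "wf_strc S arF arR M" and D_subset: "D \<subseteq> S" and h_onto: "h ` D = carrier M"
begin

definition fibre :: "'a set \<Rightarrow> 'a set" where
  "fibre c = {d \<in> D. h d = c}"

definition rep :: "'a set \<Rightarrow> 'a set" where
  "rep K = h (SOME d. d \<in> K)"

definition transported :: "('a, 'f, 'r) strc" where
  "transported =
    \<lparr>dom = D, eqv = {(d, e). d \<in> D \<and> e \<in> D \<and> h e = h d},
     fn = \<lambda>g ks. if length ks = arF g \<and> set ks \<subseteq> fibre ` carrier M
                 then fibre (fn M g (map rep ks)) else undefined,
     rl = \<lambda>r. {ks. set ks \<subseteq> fibre ` carrier M \<and> map rep ks \<in> rl M r}\<rparr>"

lemma rep_fibre: "c \<in> carrier M \<Longrightarrow> rep (fibre c) = c"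
proof -
  assume "c \<in> carrier M"
  then obtain d where "d \<in> D" "h d = c" using h_onto by (metis imageE)
  then have "d \<in> fibre c" by (simp add: fibre_def)
  then have "(SOME d. d \<in> fibre c) \<in> fibre c" by (rule someI)
  then show "rep (fibre c) = c" by (simp add: rep_def fibre_def)
qed

lemma map_rep_fibre: "set cs \<subseteq> carrier M \<Longrightarrow> map rep (map fibre cs) = cs"
  by (induction cs) (simp_all add: rep_fibre)

lemma rep_in_carrier: "K \<in> fibre ` carrier M \<Longrightarrow> rep K \<in> carrier M"
  using rep_fibre by (metis imageE)

lemma cls_transported: "d \<in> D \<Longrightarrow> cls transported d = fibre (h d)"
  by (simp add: cls_def transported_def fibre_def Image_singleton)

lemma carrier_transported: "carrier transported = fibre ` carrier M"
proof -
  have "carrier transported = cls transported ` D"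
    by (simp add: carrier_eq_image_cls transported_def)
  also have "\<dots> = (\<lambda>d. fibre (h d)) ` D" by (rule image_cong[OF refl cls_transported])
  also have "\<dots> = fibre ` carrier M" by (simp add: h_onto[symmetric] image_image)
  finally show ?thesis .
qed

lemma set_map_fibre: "set cs \<subseteq> carrier M \<Longrightarrow> set (map fibre cs) \<subseteq> fibre ` carrier M"
  by auto

lemma set_map_rep: "set ks \<subseteq> fibre ` carrier M \<Longrightarrow> set (map rep ks) \<subseteq> carrier M"
  using rep_in_carrier by auto

lemma wf_transported: "wf_strc S arF arR transported"
  unfolding wf_strc_def carrier_transported
proof (intro conjI allI impI)
  show "dom transported \<subseteq> S" using D_subset by (simp add: transported_def)
  show "equiv (dom transported) (eqv transported)"
    by (auto simp: transported_def equiv_def refl_on_def sym_def trans_def)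
next
  fix g ks assume ks: "length ks = arF g \<and> set ks \<subseteq> fibre ` carrier M"
  then have "fn M g (map rep ks) \<in> carrier M"
    using set_map_rep by (intro wf_strc_fn_closed[OF wf_M]) simp_all
  then show "fn transported g ks \<in> fibre ` carrier M" using ks by (simp add: transported_def)
next
  fix g ks assume "\<not> (length ks = arF g \<and> set ks \<subseteq> fibre ` carrier M)"
  then show "fn transported g ks = undefined"
    unfolding transported_def by (simp only: strc.select_convs if_False)
next
  fix r
  have "length ks = arR r" if "map rep ks \<in> rl M r" for ks
    using that wf_M unfolding wf_strc_def
    by (metis (mono_tags, lifting) length_map mem_Collect_eq subsetD)
  then show "rl transported r \<subseteq> {ks. length ks = arR r \<and> set ks \<subseteq> fibre ` carrier M}"
    unfolding transported_def by force
qed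

lemma iso_transported: "is_iso arF arR M transported (restrict fibre (carrier M))"
  unfolding is_iso_def carrier_transported
proof (intro conjI allI impI)
  show "bij_betw (restrict fibre (carrier M)) (carrier M) (fibre ` carrier M)"
  proof -
    have "inj_on fibre (carrier M)" by (rule inj_on_inverseI[where g = rep]) (rule rep_fibre)
    then show ?thesis by (simp add: bij_betw_def)
  qed
next
  fix g cs assume cs: "length cs = arF g \<and> set cs \<subseteq> carrier M"
  show "restrict fibre (carrier M) (fn M g cs)
      = fn transported g (map (restrict fibre (carrier M)) cs)"
  proof -
    have "fn M g cs \<in> carrier M" by (intro wf_strc_fn_closed[OF wf_M]) (use cs in simp_all)
    moreover have "fn transported g (map fibre cs) = fibre (fn M g (map rep (map fibre cs)))"
      using cs set_map_fibre[of cs] by (simp add: transported_def)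
    ultimately show ?thesis using cs by (simp add: map_restrict map_rep_fibre del: map_map)
  qed
next
  fix r cs assume cs: "length cs = arR r \<and> set cs \<subseteq> carrier M"
  then show "cs \<in> rl M r \<longleftrightarrow> map (restrict fibre (carrier M)) cs \<in> rl transported r"
    using set_map_fibre[of cs]
    by (simp add: map_restrict map_rep_fibre transported_def del: map_map)
qed simp

lemma is_obtain_isomorphic_model_oned:
  "geom_theory arF arR T \<Longrightarrow> is_model S arF arR T M \<Longrightarrow> is_model S arF arR T transported"
  by (rule is_model_iso[OF _ _ wf_transported iso_transported])

end

lemma obtain_isomorphic_model_on:
  assumes M: "M \<in> M_T S arF arR T" and T: "geom_theory arF arR T"
    and D: "D \<subseteq> S" and h: "h ` D = carrier M"
  obtains N f where "N \<in> M_T S arF arR T" "dom N = D" "is_iso arF arR M N f"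
    "\<And>d. d \<in> D \<Longrightarrow> cls N d = f (h d)"
proof -
  interpret transport S arF arR M D h
    using M D h unfolding M_T_def is_model_def by unfold_locales auto
  show ?thesis
  proof (rule that)
    show "transported \<in> M_T S arF arR T"
      using M T is_obtain_isomorphic_model_oned unfolding M_T_def by blast
    show "dom transported = D" by (simp add: transported_def)
    show "is_iso arF arR M transported (restrict fibre (carrier M))" by (rule iso_transported)
    fix d assume "d \<in> D"
    moreover from this have "h d \<in> carrier M" using h by blast
    ultimately show "cls transported d = restrict fibre (carrier M) (h d)"
      by (simp add: cls_transported)
  qed
qed

lemma card_of_Diff_finite:
  assumes "infinite S" and "finite A"
  shows "(card_of S, card_of (S - A)) \<in> ordLeq"
proof -
  have inf: "infinite (S - A)" using assms by simp
  then have "(card_of A, card_of (S - A)) \<in> ordLeq"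
    using ordLeq_total[OF card_of_Well_order card_of_Well_order] card_of_ordLeq_finite assms(2)
    by blast
  then have "(card_of ((S - A) \<union> A), card_of (S - A)) \<in> ordLeq"
    using card_of_Un_ordLeq_infinite_Field[of "card_of (S - A)" "S - A" A] inf
    by (simp add: Field_card_of card_of_Card_order card_of_card_order_on ordLeq_refl)
  moreover have "(card_of S, card_of ((S - A) \<union> A)) \<in> ordLeq" by (rule card_of_mono1) blast
  ultimately show ?thesis using ordLeq_transitive by blast
qed

lemma obtain_onto_extending:
  assumes S: "infinite S" and a: "distinct a" "set a \<subseteq> S"
    and cs: "length cs = length a" "set cs \<subseteq> C" and C: "(card_of C, card_of S) \<in> ordLeq"
  obtains D h where "set a \<subseteq> D" "D \<subseteq> S" "h ` D = C" "map h a = cs"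
proof (cases "C = {}")
  case True
  then have "cs = []" "a = []" using cs by auto
  then show ?thesis by (intro that[of "{}" "\<lambda>_. undefined"]) (simp_all add: True)
next
  case False
  have "(card_of C, card_of (S - set a)) \<in> ordLeq"
    using ordLeq_transitive[OF C card_of_Diff_finite[OF S finite_set]] .
  then have "\<exists>g. g ` (S - set a) = C" by (rule iffD2[OF card_of_ordLeq2[OF False]])
  then obtain g where g: "g ` (S - set a) = C" by (rule exE)
  define h where "h d = (case map_of (zip a cs) d of Some c \<Rightarrow> c | None \<Rightarrow> g d)" for d
  have h_a: "map h a = cs"
  proof (rule nth_equalityI)
    fix i assume "i < length (map h a)"
    then show "map h a ! i = cs ! i" using map_of_zip_nth[OF cs(1)[symmetric] a(1)] cs(1)
      by (simp add: h_def)
  qed (simp add: cs(1))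
  have "S = set a \<union> (S - set a)" using a(2) by blast
  then have "h ` S = h ` set a \<union> h ` (S - set a)" by (metis image_Un)
  also have "h ` set a = set cs" using h_a by (metis set_map)
  also have "h ` (S - set a) = g ` (S - set a)"
    by (rule image_cong[OF refl]) (simp add: h_def map_of_zip_notin)
  finally have "h ` S = C" using g cs(2) by blast
  then show ?thesis using a(2) h_a by (intro that[of S h]) auto
qed

lemma stabilization_eqI:
  assumes "X \<subseteq> Y" and "Y \<subseteq> definable S arF arR T x p" and "stable S arF arR T Y"
    and orbit: "\<And>M bs. (M, bs) \<in> Y \<Longrightarrow>
      \<exists>N g bs'. (N, bs') \<in> X \<and> (N, M, g) \<in> I_T S arF arR T \<and> bs = map g bs'"
  shows "stabilization S arF arR T x p X = Y"
proof
  show "stabilization S arF arR T x p X \<subseteq> Y"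
    unfolding stabilization_def using assms(1-3) by blast
  show "Y \<subseteq> stabilization S arF arR T x p X"
    unfolding stabilization_def
  proof (intro subsetI InterI, clarify)
    fix M bs Z assume "(M, bs) \<in> Y" and Z: "X \<subseteq> Z" "stable S arF arR T Z"
    then obtain N g bs' where "(N, bs') \<in> Z" "(N, M, g) \<in> I_T S arF arR T" "bs = map g bs'"
      using orbit by blast
    then show "(M, bs) \<in> Z" using Z(2) unfolding stable_def by blast
  qed
qed

lemma basic_open_subset_definable:
  assumes "distinct (x @ y)" and "fv \<phi> \<subseteq> set x" and "length a = length y"
  shows "basic_open S arF arR T x y \<phi> \<psi> a \<subseteq> definable S arF arR T x (Conj \<phi> (Exs y \<psi>))"
proof clarify
  fix M bs assume "(M, bs) \<in> basic_open S arF arR T x y \<phi> \<psi> a"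
  then have "M \<in> M_T S arF arR T" "bs @ map (cls M) a \<in> interp M (x @ y) (Conj \<phi> \<psi>)"
    unfolding basic_open_def by auto
  moreover have "length (map (cls M) a) = length y" using assms(3) by simp
  ultimately show "(M, bs) \<in> definable S arF arR T x (Conj \<phi> (Exs y \<psi>))"
    unfolding definable_def using interp_Conj_Exs[OF assms(1,2)] by blast
qed

lemma definable_Conj_Exs_orbit:
  assumes S: "infinite S" and T: "geom_theory arF arR T"
    and \<phi>: "fm_in_ctx arF arR x \<phi>" and \<psi>: "fm_in_ctx arF arR (x @ y) \<psi>"
    and a: "distinct a" "set a \<subseteq> S" "length a = length y"
    and Mbs: "(M, bs) \<in> definable S arF arR T x (Conj \<phi> (Exs y \<psi>))"
  shows "\<exists>N g bs'. (N, bs') \<in> basic_open S arF arR T x y \<phi> \<psi> a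
    \<and> (N, M, g) \<in> I_T S arF arR T \<and> bs = map g bs'"
proof -
  have M: "M \<in> M_T S arF arR T" and bs: "bs \<in> interp M x (Conj \<phi> (Exs y \<psi>))"
    using Mbs unfolding definable_def by auto
  have wf_M: "wf_strc S arF arR M" using M unfolding M_T_def is_model_def by blast
  obtain cs where cs: "length cs = length y" "bs @ cs \<in> interp M (x @ y) (Conj \<phi> \<psi>)"
    using bs interp_Conj_Exs \<phi> \<psi> unfolding fm_in_ctx_def by blast
  have bs_M: "set bs \<subseteq> carrier M" and cs_M: "set cs \<subseteq> carrier M"
    using cs(2) unfolding interp_def by auto
  have "(card_of (carrier M), card_of S) \<in> ordLeq"
  proof (rule ordLeq_transitive)
    show "(card_of (carrier M), card_of (dom M)) \<in> ordLeq"
      unfolding carrier_eq_image_cls by (rule card_of_image)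
    show "(card_of (dom M), card_of S) \<in> ordLeq"
      using wf_M unfolding wf_strc_def by (blast intro: card_of_mono1)
  qed
  then obtain D h where D: "set a \<subseteq> D" "D \<subseteq> S" "h ` D = carrier M" "map h a = cs"
    using obtain_onto_extending[OF S a(1,2) _ cs_M] cs(1) a(3) by metis
  obtain N f where N: "N \<in> M_T S arF arR T" "dom N = D" "is_iso arF arR M N f"
    and cls_N: "\<And>d. d \<in> D \<Longrightarrow> cls N d = f (h d)"
    using obtain_isomorphic_model_on[OF M T D(2,3)] by blast
  have "map f (bs @ cs) \<in> interp N (x @ y) (Conj \<phi> \<psi>)"
    using \<phi> \<psi> unfolding fm_in_ctx_def by (intro interp_iso[OF N(3) wf_M _ _ cs(2)]) auto
  moreover have "map (cls N) a = map f cs"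
    unfolding D(4)[symmetric] map_map by (rule map_cong[OF refl]) (use cls_N D(1) in auto)
  ultimately have "(N, map f bs) \<in> basic_open S arF arR T x y \<phi> \<psi> a"
    using N(1,2) D(1) unfolding basic_open_def by simp
  moreover have "(N, M, iso_inv M N f) \<in> I_T S arF arR T"
    using N(1,3) M is_iso_inv[OF N(3) wf_M] unfolding I_T_def by simp
  moreover have "bs = map (iso_inv M N f) (map f bs)"
    using map_iso_inv_map[OF N(3) bs_M] by simp
  ultimately show ?thesis by blast
qed

theorem lemma3p11:
  fixes S :: "'a set" and \<kappa> :: "'k rel"
    and arF :: "'f \<Rightarrow> nat" and arR :: "'r \<Rightarrow> nat"
    and T :: "('f, 'r, 'i) sequent set"
    and x y :: "nat list" and \<phi> \<psi> :: "('f, 'r, 'i) gfm" and a :: "'a list"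
  assumes "Card_order \<kappa>" and "infinite (Field \<kappa>)"
    and "(card_of (UNIV :: ('f + 'r) set), \<kappa>) \<in> ordLeq" and "(\<kappa>, card_of S) \<in> ordLeq"
    and "geom_theory arF arR T"
    and "fm_in_ctx arF arR x \<phi>" and "fm_in_ctx arF arR (x @ y) \<psi>"
    and "distinct a" and "set a \<subseteq> S" and "length a = length y"
  shows "stabilization S arF arR T x \<phi> (basic_open S arF arR T x y \<phi> \<psi> a)
       = definable S arF arR T x (Conj \<phi> (Exs y \<psi>))"
proof (rule stabilization_eqI)
  \<comment> \<open>Only the infinitude of \<open>S\<close> matters.\<close>
  have "infinite S"
    using card_of_ordLeq_infinite[OF ordIso_ordLeq_trans[OF card_of_Field_ordIso] assms(2)]
      assms(1,4) by blast
  then show "(M, bs) \<in> definable S arF arR T x (Conj \<phi> (Exs y \<psi>)) \<Longrightarrow>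
      \<exists>N g bs'. (N, bs') \<in> basic_open S arF arR T x y \<phi> \<psi> a
        \<and> (N, M, g) \<in> I_T S arF arR T \<and> bs = map g bs'" for M bs
    using definable_Conj_Exs_orbit assms(5-10) by blast
  show "basic_open S arF arR T x y \<phi> \<psi> a \<subseteq> definable S arF arR T x (Conj \<phi> (Exs y \<psi>))"
    using assms(6,7,10) unfolding fm_in_ctx_def by (intro basic_open_subset_definable) auto
  show "definable S arF arR T x (Conj \<phi> (Exs y \<psi>)) \<subseteq> definable S arF arR T x \<phi>"
    unfolding definable_def interp_def by auto
  show "stable S arF arR T (definable S arF arR T x (Conj \<phi> (Exs y \<psi>)))"
    using assms(6,7) unfolding fm_in_ctx_def by (intro stable_definable) (auto simp: wf_Exs fv_Exs)
qed

end
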